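(* Under the setting below, let $(x^*,z^*,s^* )$ with multiplier $\lambda^*$ for (C) (and nonnegative multipliers for the other constraints) be a KKT point of (P). Then for every $t$ with $(\beta_t,\theta_t)\in\Omega^{III}_t(\lambda^* )$ we have $(x_t^*,z_t^* )=(x^{III}_t(\lambda^* ),z^{III}_t(\lambda^* ))$, where $x^{III}_t(\lambda)=u_t'^{-1}\big(X_t(\lambda)/\theta_t\big)$, $z^{III}_t(\lambda)=x^{III}_t(\lambda)-a_t(\beta_t,\lambda)$, and $\Omega^{III}_t(\lambda)=\Big\{(\beta,\theta):\beta>0,\ \frac{X_t(\lambda)}{u_t'(a_t(\beta,\lambda))}\le\theta\le\frac{X_t(\lambda)}{u_t'(1)}\Big\}$.
   Context: Fix an integer $T\ge 1$, a data cap $Q>0$ and an overage fee $\pi>0$. For each $t\in\{1,\dots,T\}$ fix reals $d_t\ge 0$, $r_t\ge 0$, $c_t>0$, $p_t>0$, $\theta_t>0$, $\beta_t>0$ and functions $u_t,e_t:[0,\infty)\to\mathbb{R}$ such that: $u_t$ is continuous, increasing and strictly concave, differentiable on $(0,\infty)$, and $u_t':(0,\infty)\to(0,\infty)$ is a strictly decreasing bijection with inverse $u_t'^{-1}$; $e_t$ is increasing, strictly convex and continuously differentiable, and $e_t':[0,\infty)\to[0,\infty)$ is a strictly increasing bijection with inverse $e_t'^{-1}$. For $0\le z\le x\le 1$ let $\tilde f_t(x,z)=\theta_t u_t(x)-\beta_t e_t((x-z)c_t)-p_t c_t z$ and $\tilde h_t(x,z)=d_t x+r_t z$. Problem (P):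 maximize $\sum_{t=1}^T \tilde f_t(x_t,z_t)-\pi s$ over $x,z\in\mathbb{R}^T$, $s\in\mathbb{R}$, subject to $0\le z_t\le x_t\le 1$ for all $t$, $s\ge 0$, and (C): $s\ge \sum_{t=1}^T\tilde h_t(x_t,z_t)-Q$. A KKT point of (P) consists of a feasible $(x^*,z^*,s^* )$ and nonnegative Lagrange multipliers for all constraints satisfying stationarity of the Lagrangian and complementary slackness; $\lambda^*$ denotes the multiplier of (C) (the shadow price of wireless data). For $\lambda\ge 0$ and $\beta>0$ write $a_t(\beta,\lambda)=\frac{1}{c_t}\,e_t'^{-1}\!\Big(\frac{p_tc_t+r_t\lambda}{\beta c_t}\Big)$ and $X_t(\lambda)=p_tc_t+(d_t+r_t)\lambda$. *)

theory Defs
  imports "HOL-Analysis.Analysis"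
begin

definition strict_convex_on :: "real set \<Rightarrow> (real \<Rightarrow> real) \<Rightarrow> bool" where
  "strict_convex_on S f \<longleftrightarrow> convex S \<and>
    (\<forall>x\<in>S. \<forall>y\<in>S. \<forall>u. x \<noteq> y \<longrightarrow> 0 < u \<longrightarrow> u < 1 \<longrightarrow>
        f (u * x + (1 - u) * y) < u * f x + (1 - u) * f y)"

definition strict_concave_on :: "real set \<Rightarrow> (real \<Rightarrow> real) \<Rightarrow> bool" where
  "strict_concave_on S f \<longleftrightarrow> strict_convex_on S (\<lambda>x. - f x)"

text \<open>a_t(beta,lambda) = (1/c_t) e_t'^{-1}((p_t c_t + r_t lambda)/(beta c_t)),
  where ed is e_t' (a bijection [0,oo) -> [0,oo)).\<close>
definition a_fun :: "(real \<Rightarrow> real) \<Rightarrow> real \<Rightarrow> real \<Rightarrow> real \<Rightarrow> real \<Rightarrow> real \<Rightarrow> real" where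
  "a_fun ed c p r \<beta> lam = (1 / c) * the_inv_into {0..} ed ((p * c + r * lam) / (\<beta> * c))"

definition X_fun :: "real \<Rightarrow> real \<Rightarrow> real \<Rightarrow> real \<Rightarrow> real \<Rightarrow> real" where
  "X_fun c p d r lam = p * c + (d + r) * lam"

text \<open>x^III_t(lambda) = u_t'^{-1}(X_t(lambda)/theta_t), ud is u_t' : (0,oo) -> (0,oo).\<close>
definition xIII :: "(real \<Rightarrow> real) \<Rightarrow> real \<Rightarrow> real \<Rightarrow> real \<Rightarrow> real \<Rightarrow> real \<Rightarrow> real \<Rightarrow> real" where
  "xIII ud c p d r \<theta> lam = the_inv_into {0<..} ud (X_fun c p d r lam / \<theta>)"

definition OmegaIII :: "(real \<Rightarrow> real) \<Rightarrow> (real \<Rightarrow> real) \<Rightarrow> real \<Rightarrow> real \<Rightarrow> real \<Rightarrow> real \<Rightarrow> real \<Rightarrow> (real \<times> real) set" where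
  "OmegaIII ud ed c p d r lam = {(\<beta>, \<theta>). \<beta> > 0 \<and>
      X_fun c p d r lam / ud (a_fun ed c p r \<beta> lam) \<le> \<theta> \<and>
      \<theta> \<le> X_fun c p d r lam / ud 1}"

end

theory Submission
  imports Defs
begin

text \<open>With the marginal utility \<open>u'\<close> fixed, the first-order condition in \<open>z\<close> pins the
  share \<open>x - z\<close> to \<open>a_t(\<beta>, \<lambda>)\<close> as long as neither \<open>z = 0\<close> nor \<open>z = x\<close> binds,
  and the condition in \<open>x\<close> pins \<open>x\<close> to \<open>x\<^sup>I\<^sup>I\<^sup>I\<close> as long as \<open>x = 1\<close> does not bind. The
  inequalities defining \<open>\<Omega>\<^sup>I\<^sup>I\<^sup>I\<close> say exactly \<open>a \<le> x\<^sup>I\<^sup>I\<^sup>I \<le> 1\<close>, which rules out every binding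
  case via complementary slackness. The corner \<open>x = 0\<close> is excluded because \<open>u'\<close> is
  unbounded near \<open>0\<close>, so \<open>u\<close> has no one-sided derivative there.\<close>

lemma no_right_derivative_at_0:
  fixes u ud :: "real \<Rightarrow> real"
  assumes cont: "continuous_on {0..} u"
    and deriv: "\<And>y. y > 0 \<Longrightarrow> (u has_real_derivative ud y) (at y)"
    and decr: "strict_antimono_on {0<..} ud"
    and unbounded: "\<And>M. \<exists>y>0. M < ud y"
  shows "\<not> (u has_real_derivative D) (at 0 within {0..})"
proof
  assume D: "(u has_real_derivative D) (at 0 within {0..})"
  obtain y0 where y0: "y0 > 0" "D + 1 < ud y0" using unbounded by blast
  have slope_big: "D + 1 < (u h - u 0) / h" if h: "0 < h" "h < y0" for h
  proof -
    have "continuous_on {0..h} u" using continuous_on_subset[OF cont] by auto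
    moreover have "u differentiable (at y)" if "0 < y" for y
      using deriv[OF that] real_differentiable_def by blast
    ultimately obtain l w where w: "0 < w" "w < h" "DERIV u w :> l" "u h - u 0 = (h - 0) * l"
      using MVT[of 0 h u] h by auto
    have "l = ud w" using DERIV_unique[OF w(3) deriv[OF w(1)]] .
    moreover have "ud y0 < ud w" using decr w h by (simp add: monotone_on_def)
    ultimately show ?thesis using w(4) h y0 by simp
  qed
  from D have "((\<lambda>y. (u y - u 0) / (y - 0)) \<longlongrightarrow> D) (at 0 within {0..})"
    by (simp add: has_field_derivative_iff)
  then have "\<forall>\<^sub>F y in at 0 within {0..}. dist ((u y - u 0) / (y - 0)) D < 1"
    by (rule tendstoD) simp
  then obtain \<delta> where \<delta>: "\<delta> > 0" "\<And>y. y \<in> {0..} \<Longrightarrow> y \<noteq> 0 \<Longrightarrow> dist y 0 < \<delta> \<Longrightarrow>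
      dist ((u y - u 0) / (y - 0)) D < 1"
    unfolding eventually_at by blast
  define h where "h = min \<delta> y0 / 2"
  have h: "0 < h" "h < y0" "h < \<delta>" using \<delta> y0 by (auto simp: h_def)
  then have "dist ((u h - u 0) / h) D < 1" using \<delta>(2)[of h] by (simp add: dist_real_def)
  with slope_big[OF h(1,2)] show False by (simp add: dist_real_def)
qed

lemma strict_mono_onto_nonneg_at_0:
  fixes f :: "real \<Rightarrow> real"
  assumes "strict_mono_on {0..} f" and "f ` {0..} = {0..}"
  shows "f 0 = 0"
proof -
  obtain y where y: "y \<ge> 0" "f y = 0" using assms(2) by (metis atLeast_iff imageE order_refl)
  have "f 0 \<ge> 0" using assms(2) by auto
  moreover have "y > 0 \<Longrightarrow> f 0 < f y" using assms(1) by (simp add: monotone_on_def)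
  ultimately show ?thesis using y by force
qed

lemma a_fun_pos_and_ed:
  fixes ed :: "real \<Rightarrow> real"
  assumes ed_incr: "strict_mono_on {0..} ed" and ed_bij: "bij_betw ed {0..} {0..}"
    and "r \<ge> 0" "c > 0" "p > 0" "\<beta> > 0" "lam \<ge> 0"
  shows "a_fun ed c p r \<beta> lam > 0"
    and "\<beta> * c * ed (a_fun ed c p r \<beta> lam * c) = p * c + r * lam"
proof -
  define K where "K = (p * c + r * lam) / (\<beta> * c)"
  have K: "K > 0" using assms by (simp add: K_def add_pos_nonneg)
  define w where "w = the_inv_into {0..} ed K"
  have w: "w \<ge> 0" "ed w = K"
    using the_inv_into_into[OF bij_betw_imp_inj_on[OF ed_bij], of K] f_the_inv_into_f_bij_betw[OF ed_bij]
      bij_betw_imp_surj_on[OF ed_bij] K by (auto simp: w_def)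
  have "ed 0 = 0"
    using strict_mono_onto_nonneg_at_0 ed_incr bij_betw_imp_surj_on[OF ed_bij] by blast
  then have "w > 0" using w K by (metis less_eq_real_def less_irrefl)
  moreover have "a_fun ed c p r \<beta> lam = w / c" by (simp add: a_fun_def w_def K_def)
  ultimately show "a_fun ed c p r \<beta> lam > 0"
    and "\<beta> * c * ed (a_fun ed c p r \<beta> lam * c) = p * c + r * lam"
    using assms w by (simp_all add: K_def)
qed

lemma xIII_pos_and_ud:
  fixes ud :: "real \<Rightarrow> real"
  assumes ud_bij: "bij_betw ud {0<..} {0<..}" and X: "X_fun c p d r lam > 0" and "\<theta> > 0"
  shows "xIII ud c p d r \<theta> lam > 0" and "ud (xIII ud c p d r \<theta> lam) = X_fun c p d r lam / \<theta>"
  using the_inv_into_into[OF bij_betw_imp_inj_on[OF ud_bij], of "X_fun c p d r lam / \<theta>"]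
    f_the_inv_into_f_bij_betw[OF ud_bij] bij_betw_imp_surj_on[OF ud_bij] X assms(3)
  by (auto simp: xIII_def)

lemma OmegaIII_imp_a_le_xIII_le_1:
  fixes ud ed :: "real \<Rightarrow> real"
  assumes ud_decr: "strict_antimono_on {0<..} ud" and ud_bij: "bij_betw ud {0<..} {0<..}"
    and a: "a_fun ed c p r \<beta> lam > 0" and X: "X_fun c p d r lam > 0" and "\<theta> > 0"
    and om: "(\<beta>, \<theta>) \<in> OmegaIII ud ed c p d r lam"
  shows "a_fun ed c p r \<beta> lam \<le> xIII ud c p d r \<theta> lam" and "xIII ud c p d r \<theta> lam \<le> 1"
proof -
  let ?a = "a_fun ed c p r \<beta> lam" and ?xi = "xIII ud c p d r \<theta> lam" and ?X = "X_fun c p d r lam"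
  have xi: "?xi > 0" "ud ?xi = ?X / \<theta>" using xIII_pos_and_ud[OF ud_bij X \<open>\<theta> > 0\<close>] by auto
  have ud_pos: "ud y > 0" if "y > 0" for y using ud_bij that by (auto simp: bij_betw_def)
  have "?X / \<theta> \<le> ud ?a" and "ud 1 \<le> ?X / \<theta>"
    using om ud_pos[OF a] ud_pos[of 1] X \<open>\<theta> > 0\<close> by (auto simp: OmegaIII_def field_simps)
  moreover have "ud w < ud y" if "0 < y" "y < w" for y w
    using ud_decr that by (simp add: monotone_on_def)
  ultimately show "?a \<le> ?xi" and "?xi \<le> 1"
    using a xi by (metis not_le zero_less_one)+
qed

text \<open>In the application \<open>g = \<theta> u'\<close> and \<open>h w = \<beta> c e'(w c)\<close>, so that \<open>g xi = X(\<lambda>)\<close>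
  and \<open>h a = p c + r \<lambda>\<close> absorb the shadow-price terms of the two stationarity conditions.\<close>

lemma complementary_slackness_solution:
  fixes g h :: "real \<Rightarrow> real"
  assumes g_decr: "strict_antimono_on {0<..} g" and h_incr: "strict_mono_on {0..} h"
    and a: "0 < a" "a \<le> xi" "xi \<le> 1"
    and feas: "0 < x" "0 \<le> z" "z \<le> x" "x \<le> 1"
    and mult: "m1 \<ge> 0" "m2 \<ge> 0" "m3 \<ge> 0"
    and cs: "m1 * z = 0" "m2 * (x - z) = 0" "m3 * (1 - x) = 0"
    and stat_x: "g x + m1 - m3 = g xi"
    and stat_z: "h (x - z) + m1 - m2 = h a"
  shows "x = xi" and "z = xi - a"
proof -
  have g_lt: "g w < g y" if "0 < y" "y < w" for y w using g_decr that by (simp add: monotone_on_def)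
  have h_lt: "h y < h w" if "0 \<le> y" "y < w" for y w using h_incr that by (simp add: monotone_on_def)
  have x_ge: "xi \<le> x"
  proof (rule ccontr)
    assume "\<not> xi \<le> x"
    then have "m3 = 0" and "g xi < g x" using cs(3) a feas g_lt[of x xi] by auto
    with stat_x mult show False by simp
  qed
  have gap: "x - z = a"
  proof (rule linorder_cases[of "x - z" a])
    assume "x - z < a"
    then have "m1 > 0" using stat_z h_lt[of "x - z" a] feas mult by simp
    then have "z = 0" using cs(1) by simp
    with \<open>x - z < a\<close> x_ge a show ?thesis by simp
  next
    assume "a < x - z"
    then have "m2 > 0" using stat_z h_lt[of a "x - z"] a mult by simp
    with cs(2) \<open>a < x - z\<close> a show ?thesis by simp
  qed
  have "x \<le> xi"
  proof (rule ccontr)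
    assume "\<not> x \<le> xi"
    then have "m1 = 0" and "g x < g xi" using cs(1) gap a g_lt[of xi x] by auto
    with stat_x mult show False by simp
  qed
  with x_ge gap show "x = xi" and "z = xi - a" by simp_all
qed

lemma kkt_period_in_OmegaIII:
  fixes c p d r \<theta> \<beta> lam m1 m2 m3 x z :: real and u ud ed :: "real \<Rightarrow> real"
  assumes par: "d \<ge> 0" "r \<ge> 0" "c > 0" "p > 0" "\<theta> > 0" "\<beta> > 0" "lam \<ge> 0"
    and u_cont: "continuous_on {0..} u"
    and u_deriv: "\<And>y. y > 0 \<Longrightarrow> (u has_real_derivative ud y) (at y)"
    and ud_decr: "strict_antimono_on {0<..} ud" and ud_bij: "bij_betw ud {0<..} {0<..}"
    and ed_incr: "strict_mono_on {0..} ed" and ed_bij: "bij_betw ed {0..} {0..}"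
    and feas: "0 \<le> z" "z \<le> x" "x \<le> 1"
    and mult: "m1 \<ge> 0" "m2 \<ge> 0" "m3 \<ge> 0"
    and stat_x: "\<exists>Du. (u has_real_derivative Du) (at x within {0..}) \<and>
        \<theta> * Du - \<beta> * c * ed ((x - z) * c) + m2 - m3 - lam * d = 0"
    and stat_z: "\<beta> * c * ed ((x - z) * c) - p * c + m1 - m2 - lam * r = 0"
    and cs: "m1 * z = 0" "m2 * (x - z) = 0" "m3 * (1 - x) = 0"
    and om: "(\<beta>, \<theta>) \<in> OmegaIII ud ed c p d r lam"
  shows "x = xIII ud c p d r \<theta> lam \<and> z = xIII ud c p d r \<theta> lam - a_fun ed c p r \<beta> lam"
proof -
  let ?a = "a_fun ed c p r \<beta> lam" and ?xi = "xIII ud c p d r \<theta> lam" and ?X = "X_fun c p d r lam"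
  obtain Du where Du: "(u has_real_derivative Du) (at x within {0..})"
    and stat_Du: "\<theta> * Du - \<beta> * c * ed ((x - z) * c) + m2 - m3 - lam * d = 0"
    using stat_x by blast
  have X: "?X > 0" using par by (simp add: X_fun_def add_pos_nonneg)
  have a: "?a > 0" "\<beta> * c * ed (?a * c) = p * c + r * lam"
    using a_fun_pos_and_ed[OF ed_incr ed_bij] par by auto
  have xi: "?xi > 0" "\<theta> * ud ?xi = ?X"
    using xIII_pos_and_ud[OF ud_bij X \<open>\<theta> > 0\<close>] \<open>\<theta> > 0\<close> by simp_all
  have ud_unbounded: "\<exists>y>0. M < ud y" for M
  proof -
    have "max M 0 + 1 \<in> ud ` {0<..}" using bij_betw_imp_surj_on[OF ud_bij] by auto
    then show ?thesis by fastforce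
  qed
  have "x \<noteq> 0" using no_right_derivative_at_0[OF u_cont u_deriv ud_decr ud_unbounded] Du by blast
  then have x: "x > 0" using feas by simp
  then have "x \<in> interior {0..}" by simp
  then have "at x within {0..} = at x" by (rule at_within_interior)
  then have "Du = ud x" using Du DERIV_unique u_deriv[OF x] by metis
  then have stat_x': "\<theta> * ud x + m1 - m3 = \<theta> * ud ?xi"
    using stat_Du stat_z xi(2) by (simp add: X_fun_def algebra_simps)
  have stat_z': "\<beta> * c * ed ((x - z) * c) + m1 - m2 = \<beta> * c * ed (?a * c)"
    using stat_z a(2) by (simp add: algebra_simps)
  have "strict_antimono_on {0<..} (\<lambda>y. \<theta> * ud y)"
    using ud_decr par by (simp add: monotone_on_def)
  moreover have "strict_mono_on {0..} (\<lambda>w. \<beta> * c * ed (w * c))"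
    using ed_incr par by (simp add: monotone_on_def)
  moreover note OmegaIII_imp_a_le_xIII_le_1[OF ud_decr ud_bij a(1) X \<open>\<theta> > 0\<close> om]
  ultimately show ?thesis
    using complementary_slackness_solution[OF _ _ a(1) _ _ x feas mult cs stat_x' stat_z']
    by blast
qed

theorem lemma3:
  fixes T :: nat and Q \<pi> :: real
    and d r c p \<theta> \<beta> :: "nat \<Rightarrow> real"
    and u e ud ed :: "nat \<Rightarrow> real \<Rightarrow> real"
    and x z \<mu>1 \<mu>2 \<mu>3 :: "nat \<Rightarrow> real" and s \<nu> lam :: real
  assumes T: "T \<ge> 1" and Q: "Q > 0" and pi: "\<pi> > 0"
    and params: "\<And>t. t \<in> {1..T} \<Longrightarrow>
        d t \<ge> 0 \<and> r t \<ge> 0 \<and> c t > 0 \<and> p t > 0 \<and> \<theta> t > 0 \<and> \<beta> t > 0"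
    \<comment> \<open>assumptions on u_t, with ud t = u_t'\<close>
    and u_cont: "\<And>t. t \<in> {1..T} \<Longrightarrow> continuous_on {0..} (u t)"
    and u_mono: "\<And>t. t \<in> {1..T} \<Longrightarrow> mono_on {0..} (u t)"
    and u_sconc: "\<And>t. t \<in> {1..T} \<Longrightarrow> strict_concave_on {0..} (u t)"
    and u_deriv: "\<And>t y. t \<in> {1..T} \<Longrightarrow> y > 0 \<Longrightarrow> (u t has_real_derivative ud t y) (at y)"
    and ud_decr: "\<And>t. t \<in> {1..T} \<Longrightarrow> strict_antimono_on {0<..} (ud t)"
    and ud_bij: "\<And>t. t \<in> {1..T} \<Longrightarrow> bij_betw (ud t) {0<..} {0<..}"
    \<comment> \<open>assumptions on e_t, with ed t = e_t'\<close>
    and e_mono: "\<And>t. t \<in> {1..T} \<Longrightarrow> mono_on {0..} (e t)"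
    and e_sconv: "\<And>t. t \<in> {1..T} \<Longrightarrow> strict_convex_on {0..} (e t)"
    and e_deriv: "\<And>t y. t \<in> {1..T} \<Longrightarrow> y \<ge> 0 \<Longrightarrow>
        (e t has_real_derivative ed t y) (at y within {0..})"
    and ed_cont: "\<And>t. t \<in> {1..T} \<Longrightarrow> continuous_on {0..} (ed t)"
    and ed_incr: "\<And>t. t \<in> {1..T} \<Longrightarrow> strict_mono_on {0..} (ed t)"
    and ed_bij: "\<And>t. t \<in> {1..T} \<Longrightarrow> bij_betw (ed t) {0..} {0..}"
    \<comment> \<open>KKT point of (P): primal feasibility\<close>
    and feas: "\<And>t. t \<in> {1..T} \<Longrightarrow> 0 \<le> z t \<and> z t \<le> x t \<and> x t \<le> 1"
    and s_nonneg: "s \<ge> 0"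
    and C: "s \<ge> (\<Sum>t=1..T. d t * x t + r t * z t) - Q"
    \<comment> \<open>dual feasibility\<close>
    and mult_nonneg: "\<And>t. t \<in> {1..T} \<Longrightarrow> \<mu>1 t \<ge> 0 \<and> \<mu>2 t \<ge> 0 \<and> \<mu>3 t \<ge> 0"
    and \<nu>_nonneg: "\<nu> \<ge> 0" and lam_nonneg: "lam \<ge> 0"
    \<comment> \<open>stationarity of the Lagrangian
        sum_t f_t - pi s + sum_t (mu1 z + mu2 (x - z) + mu3 (1 - x)) + nu s
          + lambda (s - sum_t h_t + Q)\<close>
    and stat_x: "\<And>t. t \<in> {1..T} \<Longrightarrow> \<exists>Du. (u t has_real_derivative Du) (at (x t) within {0..}) \<and>
        \<theta> t * Du - \<beta> t * c t * ed t ((x t - z t) * c t) + \<mu>2 t - \<mu>3 t - lam * d t = 0"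
    and stat_z: "\<And>t. t \<in> {1..T} \<Longrightarrow>
        \<beta> t * c t * ed t ((x t - z t) * c t) - p t * c t + \<mu>1 t - \<mu>2 t - lam * r t = 0"
    and stat_s: "- \<pi> + \<nu> + lam = 0"
    \<comment> \<open>complementary slackness\<close>
    and cs: "\<And>t. t \<in> {1..T} \<Longrightarrow>
        \<mu>1 t * z t = 0 \<and> \<mu>2 t * (x t - z t) = 0 \<and> \<mu>3 t * (1 - x t) = 0"
    and cs_s: "\<nu> * s = 0"
    and cs_C: "lam * (s - ((\<Sum>t=1..T. d t * x t + r t * z t) - Q)) = 0"
  shows "\<forall>t\<in>{1..T}. (\<beta> t, \<theta> t) \<in> OmegaIII (ud t) (ed t) (c t) (p t) (d t) (r t) lam \<longrightarrow>
           x t = xIII (ud t) (c t) (p t) (d t) (r t) (\<theta> t) lam \<and>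
           z t = xIII (ud t) (c t) (p t) (d t) (r t) (\<theta> t) lam - a_fun (ed t) (c t) (p t) (r t) (\<beta> t) lam"
proof (intro ballI impI)
  fix t assume t: "t \<in> {1..T}"
    and om: "(\<beta> t, \<theta> t) \<in> OmegaIII (ud t) (ed t) (c t) (p t) (d t) (r t) lam"
  show "x t = xIII (ud t) (c t) (p t) (d t) (r t) (\<theta> t) lam \<and>
      z t = xIII (ud t) (c t) (p t) (d t) (r t) (\<theta> t) lam - a_fun (ed t) (c t) (p t) (r t) (\<beta> t) lam"
    using params[OF t] lam_nonneg u_cont[OF t] u_deriv[OF t] ud_decr[OF t] ud_bij[OF t]
      ed_incr[OF t] ed_bij[OF t] feas[OF t] mult_nonneg[OF t] stat_x[OF t] stat_z[OF t] cs[OF t] om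
    by (intro kkt_period_in_OmegaIII) auto
qed

end
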